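(* For all $x\ge \tfrac{11}{2}$, $|w_0(x)|\le \tfrac{15}{2}x^{-10}$ (i.e. $\sup_{x\ge 11/2}x^{10}|w_0(x)|\le \tfrac{15}{2}$) and $|w_0'(x)|\le 8.85\,x^{-39/4}$.
   Context: Let $b=\tfrac45(24)^{1/4}$, $a=\tfrac52b$, $N_0(x)=-\tfrac{4412401}{98304\sqrt6}x^{-19/2}\bigl[1-\tfrac{1225}{90049\sqrt6}x^{-5/2}+\tfrac{30625}{2161176}x^{-5}\bigr]$, $\mathcal G_1(x)=x^{-5/8}e^{-ibx^{5/4}}$, $\mathcal G_2(x)=x^{-5/8}e^{ibx^{5/4}}$, and for $x>0$, $w_0(x)=\sum_{j=1}^2\frac{(-1)^j}{ia}\mathcal G_j(x)\int_\infty^x\mathcal G_{3-j}(t)\,t\,N_0(t)\,dt$. *)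

theory Defs
  imports "HOL-Analysis.Analysis"
begin

definition bconst :: real where
  "bconst = 4/5 * 24 powr (1/4)"

definition aconst :: real where
  "aconst = 5/2 * bconst"

definition N0 :: "real \<Rightarrow> real" where
  "N0 x = - (4412401 / (98304 * sqrt 6)) * x powr (-19/2) *
     (1 - 1225 / (90049 * sqrt 6) * x powr (-5/2) + 30625 / 2161176 * x powr (-5))"

definition G1 :: "real \<Rightarrow> complex" where
  "G1 x = complex_of_real (x powr (-5/8)) * exp (- \<i> * complex_of_real (bconst * x powr (5/4)))"

definition G2 :: "real \<Rightarrow> complex" where
  "G2 x = complex_of_real (x powr (-5/8)) * exp (\<i> * complex_of_real (bconst * x powr (5/4)))"

definition int_inf_to :: "(real \<Rightarrow> complex) \<Rightarrow> real \<Rightarrow> complex" where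
  "int_inf_to g x = - integral {x..} g"

definition w0 :: "real \<Rightarrow> complex" where
  "w0 x =
     (-1) / (\<i> * complex_of_real aconst) * G1 x *
        int_inf_to (\<lambda>t. G2 t * complex_of_real (t * N0 t)) x
   + 1 / (\<i> * complex_of_real aconst) * G2 x *
        int_inf_to (\<lambda>t. G1 t * complex_of_real (t * N0 t)) x"

end

theory Submission
  imports Defs
begin

(*
  G1 and G2 are t^(-5/8) e^(-+ i phase t) with phase t = bconst * t^(5/4), and the integrands of w0
  are amp t * phase' t * e^(+- i phase t) with an amplitude amp of order t^(-75/8). One integration
  by parts therefore gives

    int_x^oo amp * phase' * e^(i s phase) = - (amp x * e^(i s phase x) + R_s x) / (i s),
    R_s x = int_x^oo amp' * e^(i s phase),   |R_s x| <= int_x^oo |amp'| <= M x,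

  with M x = (2 cN / a) x^(-75/8) (1 + eps1 x^(-5/2) + eps2 x^(-5)). Inserted into w0, the boundary
  terms combine to the real number 2 x^(-5/8) amp x / a, whence |w0 x| <= 4 x^(-5/8) M x / a. When
  w0 is differentiated, the two terms coming from the variable lower limits cancel, leaving
  w0' = -5/(8x) w0 + phase' (G1 R_1 - G2 R_(-1)) / (i a), which is bounded in the same way. For
  x >= 11/2 explicit numerical estimates then give the constants 15/2 and 8.85.
*)

section \<open>Integration by parts against an oscillating factor\<close>

lemma absolutely_integrable_of_real_times_cis:
  fixes k \<theta> :: "real \<Rightarrow> real"
  assumes "S \<in> sets lebesgue" "continuous_on S k" "continuous_on S \<theta>"
    and "k absolutely_integrable_on S"
  shows "(\<lambda>t. of_real (k t) * cis (\<theta> t)) absolutely_integrable_on S"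
proof (rule measurable_bounded_by_integrable_imp_absolutely_integrable)
  show "(\<lambda>t. of_real (k t) * cis (\<theta> t)) \<in> borel_measurable (lebesgue_on S)"
    using assms(1-3) by (intro continuous_imp_measurable_on_sets_lebesgue continuous_intros)
  show "norm (of_real (k t) * cis (\<theta> t)) \<le> \<bar>k t\<bar>" for t
    by (simp add: norm_mult)
  show "(\<lambda>t. \<bar>k t\<bar>) integrable_on S"
    using assms(4) by (simp add: absolutely_integrable_on_def)
qed (rule assms(1))

lemma powr_absolutely_integrable_at_top:
  fixes a e :: real
  assumes "e < -1" "a > 0"
  shows "(\<lambda>t. t powr e) absolutely_integrable_on {a..}"
proof (rule nonnegative_absolutely_integrable_1)
  show "(\<lambda>t. t powr e) integrable_on {a..}"
    using has_integral_powr_to_inf[OF assms] by blast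
qed simp

lemma has_integral_at_top_of_tendsto_zero:
  fixes F f :: "real \<Rightarrow> 'b::euclidean_space"
  assumes der: "\<And>t. t \<ge> a \<Longrightarrow> (F has_vector_derivative f t) (at t)"
    and ai: "f absolutely_integrable_on {a..}"
    and lim: "(F \<longlongrightarrow> 0) at_top"
  shows "(f has_integral - F a) {a..}"
proof -
  have partial: "set_lebesgue_integral lebesgue {a..b} f = F b - F a" if "b \<ge> a" for b
  proof -
    have "(f has_integral F b - F a) {a..b}"
      by (rule fundamental_theorem_of_calculus)
         (use that der in \<open>auto intro: has_vector_derivative_at_within\<close>)
    moreover have "f absolutely_integrable_on {a..b}"
      by (rule set_integrable_subset[OF ai]) auto
    ultimately show ?thesis
      using set_lebesgue_integral_eq_integral(2) integral_unique by metis
  qed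
  have "((\<lambda>b. set_lebesgue_integral lebesgue {a..b} f) \<longlongrightarrow> set_lebesgue_integral lebesgue {a..} f) at_top"
    by (rule tendsto_set_lebesgue_integral_at_top) (use ai in auto)
  moreover have "((\<lambda>b. set_lebesgue_integral lebesgue {a..b} f) \<longlongrightarrow> 0 - F a) at_top"
    using tendsto_diff[OF lim tendsto_const[of "F a"]]
    by (rule Lim_transform_eventually)
       (use partial in \<open>auto intro!: eventually_mono[OF eventually_ge_at_top[of a]]\<close>)
  ultimately have "set_lebesgue_integral lebesgue {a..} f = - F a"
    using tendsto_unique by force
  then have "integral {a..} f = - F a"
    using set_lebesgue_integral_eq_integral(2)[OF ai] by simp
  then show ?thesis
    using integrable_integral[OF set_lebesgue_integral_eq_integral(1)[OF ai]] by simp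
qed

lemma has_vector_derivative_integral_tail:
  fixes f :: "real \<Rightarrow> 'b::euclidean_space"
  assumes cont: "continuous_on {a..} f"
    and tails: "\<And>u. u \<ge> a \<Longrightarrow> f integrable_on {u..}"
    and "a < y"
  shows "((\<lambda>u. integral {u..} f) has_vector_derivative - f y) (at y)"
proof -
  have split: "integral {u..} f = integral {a..} f - integral {a..u} f" if "u > a" for u
  proof -
    have "(f has_integral integral {a..u} f + integral {u..} f) ({a..u} \<union> {u..})"
    proof (rule has_integral_Un)
      show "(f has_integral integral {a..u} f) {a..u}"
        using integrable_continuous_interval[of a u f] continuous_on_subset[OF cont, of "{a..u}"]
        by (auto simp: has_integral_integral)
      show "(f has_integral integral {u..} f) {u..}"
        using tails that by auto
    qed (auto intro: negligible_subset[OF negligible_sing[of u]])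
    moreover have "{a..u} \<union> {u..} = {a..}" using that by auto
    ultimately show ?thesis by (metis integral_unique add_diff_cancel_left')
  qed
  have "((\<lambda>u. integral {a..u} f) has_vector_derivative f y) (at y within {a..y+1})"
    by (rule integral_has_vector_derivative) (use \<open>a < y\<close> cont in \<open>auto intro: continuous_on_subset\<close>)
  then have "((\<lambda>u. integral {a..u} f) has_vector_derivative f y) (at y within {a<..<y+1})"
    by (rule has_vector_derivative_within_subset) auto
  then have "((\<lambda>u. integral {a..u} f) has_vector_derivative f y) (at y)"
    using has_vector_derivative_within_open[of y "{a<..<y+1}"] \<open>a < y\<close> by auto
  then have "((\<lambda>u. integral {a..} f - integral {a..u} f) has_vector_derivative - f y) (at y)"
    using has_vector_derivative_diff[OF has_vector_derivative_const] by simp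
  then show ?thesis
    by (rule has_vector_derivative_transform_within_open[where S="{a<..}"]) (use \<open>a < y\<close> split in auto)
qed

lemma continuous_on_if_has_real_derivative:
  assumes "\<And>t. t \<in> S \<Longrightarrow> (f has_real_derivative f' t) (at t)"
  shows "continuous_on S f"
  using assms DERIV_isCont continuous_at_imp_continuous_on by blast

lemma cis_has_vector_derivative:
  assumes "(f has_real_derivative f') (at t)"
  shows "((\<lambda>t. cis (f t)) has_vector_derivative \<i> * of_real f' * cis (f t)) (at t)"
  using has_derivative_cis[OF assms[unfolded has_field_derivative_def]]
  by (simp add: has_vector_derivative_def scaleR_conv_of_real mult_ac)

lemma oscillatory_integral_by_parts:
  fixes K K' \<phi> \<phi>' :: "real \<Rightarrow> real" and s y :: real
  assumes "s \<noteq> 0"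
    and K: "\<And>t. t \<ge> y \<Longrightarrow> (K has_real_derivative K' t) (at t)"
    and \<phi>: "\<And>t. t \<ge> y \<Longrightarrow> (\<phi> has_real_derivative \<phi>' t) (at t)"
    and cont: "continuous_on {y..} K'" "continuous_on {y..} \<phi>'"
    and ai: "K' absolutely_integrable_on {y..}" "(\<lambda>t. K t * \<phi>' t) absolutely_integrable_on {y..}"
    and lim: "(K \<longlongrightarrow> 0) at_top"
  defines "R \<equiv> integral {y..} (\<lambda>t. of_real (K' t) * cis (s * \<phi> t))"
  shows "((\<lambda>t. of_real (K t * \<phi>' t) * cis (s * \<phi> t)) has_integral
           - (of_real (K y) * cis (s * \<phi> y) + R) / (\<i> * of_real s)) {y..}"
    and "norm R \<le> integral {y..} (\<lambda>t. \<bar>K' t\<bar>)"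
proof -
  define F where "F t = of_real (K t) * cis (s * \<phi> t) * (1 / (\<i> * of_real s))" for t
  define r where "r t = of_real (K' t) * cis (s * \<phi> t)" for t
  define g where "g t = of_real (K t * \<phi>' t) * cis (s * \<phi> t)" for t
  have cont_\<phi>: "continuous_on {y..} \<phi>" and cont_K: "continuous_on {y..} K"
    using K \<phi> by (auto intro: continuous_on_if_has_real_derivative)
  have norm_r: "norm (r t) = \<bar>K' t\<bar>" for t
    by (simp add: r_def norm_mult)
  have ai_r: "r absolutely_integrable_on {y..}"
    unfolding r_def using cont cont_\<phi> ai(1)
    by (intro absolutely_integrable_of_real_times_cis continuous_intros) auto
  have ai_g: "g absolutely_integrable_on {y..}"
    unfolding g_def using cont cont_\<phi> cont_K ai(2)
    by (intro absolutely_integrable_of_real_times_cis continuous_intros) auto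
  have F_deriv: "(F has_vector_derivative r t / (\<i> * of_real s) + g t) (at t)" if "t \<ge> y" for t
  proof -
    have "((\<lambda>t. s * \<phi> t) has_real_derivative s * \<phi>' t) (at t)"
      using \<phi>[OF that] by (rule DERIV_cmult)
    then have "(F has_vector_derivative
        (of_real (K t) * (\<i> * of_real (s * \<phi>' t) * cis (s * \<phi> t)) + of_real (K' t) * cis (s * \<phi> t))
          * (1 / (\<i> * of_real s))) (at t)"
      unfolding F_def using K[OF that]
      by (intro has_vector_derivative_mult_left has_vector_derivative_mult
          has_vector_derivative_of_real cis_has_vector_derivative)
    then show ?thesis
      using \<open>s \<noteq> 0\<close> by (simp add: r_def g_def field_simps)
  qed
  have "(F \<longlongrightarrow> 0) at_top"
  proof (rule Lim_null_comparison)
    show "\<forall>\<^sub>F t in at_top. norm (F t) \<le> \<bar>K t\<bar> / \<bar>s\<bar>"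
      by (simp add: F_def norm_mult norm_divide)
    show "((\<lambda>t. \<bar>K t\<bar> / \<bar>s\<bar>) \<longlongrightarrow> 0) at_top"
      using tendsto_divide_zero[OF tendsto_rabs_zero[OF lim]] .
  qed
  then have sum_integral: "((\<lambda>t. r t / (\<i> * of_real s) + g t) has_integral - F y) {y..}"
    using F_deriv ai_r ai_g by (intro has_integral_at_top_of_tendsto_zero set_integral_add set_integrable_divide)
  show "norm R \<le> integral {y..} (\<lambda>t. \<bar>K' t\<bar>)"
    unfolding R_def r_def[symmetric]
    by (rule integral_norm_bound_integral)
       (use set_lebesgue_integral_eq_integral(1)[OF ai_r] ai(1) norm_r in
         \<open>auto simp: absolutely_integrable_on_def\<close>)
  have "((\<lambda>t. r t / (\<i> * of_real s)) has_integral R / (\<i> * of_real s)) {y..}"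
    unfolding R_def r_def[symmetric]
    by (intro has_integral_divide integrable_integral set_lebesgue_integral_eq_integral(1)[OF ai_r])
  from has_integral_diff[OF sum_integral this]
  have "(g has_integral - F y - R / (\<i> * of_real s)) {y..}"
    by simp
  moreover have "- F y - R / (\<i> * of_real s) = - (of_real (K y) * cis (s * \<phi> y) + R) / (\<i> * of_real s)"
    unfolding F_def using \<open>s \<noteq> 0\<close> by (simp add: field_simps)
  ultimately show "(g has_integral - (of_real (K y) * cis (s * \<phi> y) + R) / (\<i> * of_real s)) {y..}"
    by simp
qed

section \<open>Phase and amplitude of the integrands\<close>

lemma aconst_pos: "aconst > 0"
  by (simp add: aconst_def bconst_def)

definition phase :: "real \<Rightarrow> real" where
  "phase t = bconst * t powr (5/4)"

definition dphase :: "real \<Rightarrow> real" where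
  "dphase t = aconst / 2 * t powr (1/4)"

lemma phase_has_real_derivative:
  assumes "t > 0"
  shows "(phase has_real_derivative dphase t) (at t)"
  unfolding phase_def[abs_def] dphase_def aconst_def using assms
  by (auto intro!: derivative_eq_intros simp: powr_diff)

definition cN :: real where "cN = 4412401 / (98304 * sqrt 6)"
definition eps1 :: real where "eps1 = 1225 / (90049 * sqrt 6)"
definition eps2 :: real where "eps2 = 30625 / 2161176"

lemma N0_eq: "N0 t = - cN * t powr (-19/2) * (1 - eps1 * t powr (-5/2) + eps2 * t powr (-5))"
  by (simp add: N0_def cN_def eps1_def eps2_def)

lemma N0_constants_pos: "cN > 0" "eps1 > 0" "eps2 > 0"
  by (simp_all add: cN_def eps1_def eps2_def)

definition amp :: "real \<Rightarrow> real" where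
  "amp t = - (2 * cN / aconst) * (t powr (-75/8) - eps1 * t powr (-95/8) + eps2 * t powr (-115/8))"

definition amp' :: "real \<Rightarrow> real" where
  "amp' t = 2 * cN / aconst *
     (75/8 * t powr (-83/8) - eps1 * (95/8) * t powr (-103/8) + eps2 * (115/8) * t powr (-123/8))"

definition amp_majorant :: "real \<Rightarrow> real" where
  "amp_majorant t = 2 * cN / aconst * (t powr (-75/8) + eps1 * t powr (-95/8) + eps2 * t powr (-115/8))"

lemma abs_mult_alternating_sum_le:
  fixes k a b c :: real
  assumes "k \<ge> 0" "a \<ge> 0" "b \<ge> 0" "c \<ge> 0"
  shows "\<bar>k * (a - b + c)\<bar> \<le> k * (a + b + c)"
  using assms by (simp add: abs_mult mult_left_mono)

lemma amp_has_real_derivative: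
  assumes "t > 0"
  shows "(amp has_real_derivative amp' t) (at t)"
  unfolding amp_def[abs_def] amp'_def using assms aconst_pos
  by (auto intro!: derivative_eq_intros simp: algebra_simps)

lemma amp_tendsto_zero: "(amp \<longlongrightarrow> 0) at_top"
proof -
  have "((\<lambda>t. - (2 * cN / aconst) * (t powr (-75/8) - eps1 * t powr (-95/8) + eps2 * t powr (-115/8)))
      \<longlongrightarrow> - (2 * cN / aconst) * (0 - eps1 * 0 + eps2 * 0)) at_top"
    by (intro tendsto_intros tendsto_neg_powr filterlim_ident) auto
  then show ?thesis
    by (simp add: amp_def[abs_def])
qed

lemma abs_amp_le: "\<bar>amp t\<bar> \<le> amp_majorant t"
  unfolding amp_def amp_majorant_def mult_minus_left abs_minus_cancel
  using N0_constants_pos aconst_pos by (intro abs_mult_alternating_sum_le) auto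

lemma amp_mult_dphase:
  assumes "t > 0"
  shows "amp t * dphase t = - cN * (t powr (-73/8) - eps1 * t powr (-93/8) + eps2 * t powr (-113/8))"
  unfolding amp_def dphase_def using aconst_pos
  by (simp add: field_simps powr_add[symmetric])

lemma weighted_N0_eq:
  assumes "t > 0"
  shows "t powr (-5/8) * (t * N0 t) = amp t * dphase t"
  unfolding amp_mult_dphase[OF assms] N0_eq using assms
  by (simp add: algebra_simps powr_mult_base powr_add[symmetric])

lemma amp'_absolutely_integrable:
  assumes "y > 0"
  shows "amp' absolutely_integrable_on {y..}"
  unfolding amp'_def[abs_def] using assms
  by (intro set_integral_add set_integral_diff set_integrable_mult_right powr_absolutely_integrable_at_top)
     auto

lemma amp_dphase_absolutely_integrable:
  assumes "y > 0"
  shows "(\<lambda>t. amp t * dphase t) absolutely_integrable_on {y..}"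
proof -
  have "(\<lambda>t. - cN * (t powr (-73/8) - eps1 * t powr (-93/8) + eps2 * t powr (-113/8)))
      absolutely_integrable_on {y..}"
    using assms
    by (intro set_integral_add set_integral_diff set_integrable_mult_right powr_absolutely_integrable_at_top)
       auto
  then show ?thesis
    using assms by (subst set_integrable_cong[OF refl refl]) (auto simp: amp_mult_dphase)
qed

lemma integral_abs_amp'_le:
  assumes "y > 0"
  shows "integral {y..} (\<lambda>t. \<bar>amp' t\<bar>) \<le> amp_majorant y"
proof -
  define m where "m t = 2 * cN / aconst *
     (75/8 * t powr (-83/8) + eps1 * (95/8) * t powr (-103/8) + eps2 * (115/8) * t powr (-123/8))" for t
  have "(m has_integral 2 * cN / aconst * (75/8 * (- (y powr (-83/8 + 1)) / (-83/8 + 1))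
      + eps1 * (95/8) * (- (y powr (-103/8 + 1)) / (-103/8 + 1))
      + eps2 * (115/8) * (- (y powr (-123/8 + 1)) / (-123/8 + 1)))) {y..}"
    unfolding m_def using assms
    by (intro has_integral_mult_right has_integral_add has_integral_powr_to_inf) auto
  then have m_integral: "(m has_integral amp_majorant y) {y..}"
    by (simp add: amp_majorant_def)
  have "\<bar>amp' t\<bar> \<le> m t" for t
    unfolding amp'_def m_def using N0_constants_pos aconst_pos
    by (intro abs_mult_alternating_sum_le) auto
  moreover have "(\<lambda>t. \<bar>amp' t\<bar>) integrable_on {y..}"
    using amp'_absolutely_integrable[OF assms] by (simp add: absolutely_integrable_on_def)
  ultimately have "integral {y..} (\<lambda>t. \<bar>amp' t\<bar>) \<le> integral {y..} m"
    using m_integral by (intro integral_le) auto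
  then show ?thesis
    using m_integral by (simp add: integral_unique)
qed

definition osc_remainder :: "real \<Rightarrow> real \<Rightarrow> complex" where
  "osc_remainder s y = integral {y..} (\<lambda>t. of_real (amp' t) * cis (s * phase t))"

definition osc_tail :: "real \<Rightarrow> real \<Rightarrow> complex" where
  "osc_tail s u = integral {u..} (\<lambda>t. of_real (amp t * dphase t) * cis (s * phase t))"

lemma oscillatory_tail:
  assumes "y > 0" "s \<noteq> 0"
  shows "((\<lambda>t. of_real (amp t * dphase t) * cis (s * phase t)) has_integral
           - (of_real (amp y) * cis (s * phase y) + osc_remainder s y) / (\<i> * of_real s)) {y..}"
    and "norm (osc_remainder s y) \<le> amp_majorant y"
proof -
  have cont: "continuous_on {y..} amp'" "continuous_on {y..} dphase"
    using assms aconst_pos unfolding amp'_def[abs_def] dphase_def[abs_def]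
    by (auto intro!: continuous_intros)
  have deriv: "(amp has_real_derivative amp' t) (at t)" "(phase has_real_derivative dphase t) (at t)"
    if "t \<ge> y" for t
    using that assms by (auto intro: amp_has_real_derivative phase_has_real_derivative)
  note by_parts = oscillatory_integral_by_parts[OF \<open>s \<noteq> 0\<close> deriv cont
      amp'_absolutely_integrable[OF assms(1)] amp_dphase_absolutely_integrable[OF assms(1)]
      amp_tendsto_zero, folded osc_remainder_def]
  show "((\<lambda>t. of_real (amp t * dphase t) * cis (s * phase t)) has_integral
           - (of_real (amp y) * cis (s * phase y) + osc_remainder s y) / (\<i> * of_real s)) {y..}"
    by (rule by_parts(1))
  show "norm (osc_remainder s y) \<le> amp_majorant y"
    using by_parts(2) integral_abs_amp'_le[OF assms(1)] by linarith
qed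

lemma osc_tail_eq:
  assumes "y > 0" "s \<noteq> 0"
  shows "osc_tail s y = - (of_real (amp y) * cis (s * phase y) + osc_remainder s y) / (\<i> * of_real s)"
  unfolding osc_tail_def using oscillatory_tail(1)[OF assms] by (rule integral_unique)

lemma osc_tails_eq:
  assumes "x > 0"
  shows "osc_tail 1 x = - (of_real (amp x) * cis (phase x) + osc_remainder 1 x) / \<i>"
    and "osc_tail (-1) x = (of_real (amp x) * cis (- phase x) + osc_remainder (-1) x) / \<i>"
  using osc_tail_eq[OF assms, of 1] osc_tail_eq[OF assms, of "-1"] by (simp_all add: algebra_simps)

lemma osc_tail_has_vector_derivative:
  assumes "x > 0" "s \<noteq> 0"
  shows "(osc_tail s has_vector_derivative - (of_real (amp x * dphase x) * cis (s * phase x))) (at x)"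
  unfolding osc_tail_def[abs_def]
proof (rule has_vector_derivative_integral_tail)
  show "continuous_on {x/2..} (\<lambda>t. of_real (amp t * dphase t) * cis (s * phase t))"
    using assms aconst_pos unfolding amp_def[abs_def] dphase_def[abs_def] phase_def[abs_def]
    by (auto intro!: continuous_intros)
  show "(\<lambda>t. of_real (amp t * dphase t) * cis (s * phase t)) integrable_on {u..}" if "x/2 \<le> u" for u
    using oscillatory_tail(1)[of u s] that assms by auto
qed (use assms in auto)

section \<open>A closed form for w0 and its derivative\<close>

lemma G1_eq: "G1 t = of_real (t powr (-5/8)) * cis (- phase t)"
  by (simp add: G1_def phase_def cis_conv_exp)

lemma G2_eq: "G2 t = of_real (t powr (-5/8)) * cis (phase t)"
  by (simp add: G2_def phase_def cis_conv_exp)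

lemma norm_G1: "norm (G1 t) = t powr (-5/8)" and norm_G2: "norm (G2 t) = t powr (-5/8)"
  by (simp_all add: G1_eq G2_eq norm_mult)

lemma G1_cis_phase_eq_G2_cis_phase: "G1 t * cis (phase t) = G2 t * cis (- phase t)"
  by (simp add: G1_eq G2_eq mult.assoc cis_mult)

lemma weighted_cis_has_vector_derivative:
  assumes "t > 0"
  shows "((\<lambda>t. of_real (t powr (-5/8)) * cis (s * phase t)) has_vector_derivative
           (of_real (- 5 / (8 * t)) + \<i> * of_real (s * dphase t)) * (of_real (t powr (-5/8)) * cis (s * phase t)))
         (at t)"
proof -
  have "((\<lambda>t. t powr (-5/8)) has_real_derivative - 5 / (8 * t) * t powr (-5/8)) (at t)"
    using assms by (auto intro!: derivative_eq_intros simp: powr_diff field_simps powr_mult_base)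
  moreover have "((\<lambda>t. s * phase t) has_real_derivative s * dphase t) (at t)"
    using phase_has_real_derivative[OF assms] by (rule DERIV_cmult)
  ultimately have "((\<lambda>t. of_real (t powr (-5/8)) * cis (s * phase t)) has_vector_derivative
      of_real (t powr (-5/8)) * (\<i> * of_real (s * dphase t) * cis (s * phase t))
      + of_real (- 5 / (8 * t) * t powr (-5/8)) * cis (s * phase t)) (at t)"
    by (intro has_vector_derivative_mult has_vector_derivative_of_real cis_has_vector_derivative)
  then show ?thesis
    by (simp add: algebra_simps)
qed

lemma w0_eq_osc_tails:
  assumes "u > 0"
  shows "w0 u = (G1 u * osc_tail 1 u - G2 u * osc_tail (-1) u) / (\<i> * of_real aconst)"
proof -
  have integrands: "G2 t * of_real (t * N0 t) = of_real (amp t * dphase t) * cis (1 * phase t)"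
    "G1 t * of_real (t * N0 t) = of_real (amp t * dphase t) * cis (-1 * phase t)"
    if "t \<in> {u..}" for t
  proof -
    have weighted: "amp t * dphase t = t powr (-5/8) * (t * N0 t)"
      using weighted_N0_eq that assms by simp
    show "G2 t * of_real (t * N0 t) = of_real (amp t * dphase t) * cis (1 * phase t)"
      "G1 t * of_real (t * N0 t) = of_real (amp t * dphase t) * cis (-1 * phase t)"
      unfolding G1_eq G2_eq weighted of_real_mult by (simp_all add: mult_ac)
  qed
  have "integral {u..} (\<lambda>t. G2 t * of_real (t * N0 t)) = osc_tail 1 u"
    unfolding osc_tail_def by (rule integral_cong) (rule integrands(1))
  moreover have "integral {u..} (\<lambda>t. G1 t * of_real (t * N0 t)) = osc_tail (-1) u"
    unfolding osc_tail_def by (rule integral_cong) (rule integrands(2))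
  ultimately show ?thesis
    unfolding w0_def int_inf_to_def by (simp add: diff_divide_distrib)
qed

lemma w0_closed_form:
  assumes "x > 0"
  shows "w0 x = (of_real (2 * x powr (-5/8) * amp x)
                 + G1 x * osc_remainder 1 x + G2 x * osc_remainder (-1) x) / of_real aconst"
  unfolding w0_eq_osc_tails[OF assms] osc_tails_eq[OF assms] G1_eq G2_eq cis_inverse[symmetric]
  using aconst_pos by (simp add: field_simps del: cis_inverse)

lemma norm_w0_le:
  assumes "x > 0"
  shows "norm (w0 x) \<le> 4 * x powr (-5/8) * amp_majorant x / aconst"
proof -
  define p where "p = x powr (-5/8)"
  define num where "num = of_real (2 * p * amp x) + G1 x * osc_remainder 1 x + G2 x * osc_remainder (-1) x"
  have "norm num \<le> norm (of_real (2 * p * amp x) :: complex) + norm (G1 x * osc_remainder 1 x)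
         + norm (G2 x * osc_remainder (-1) x)"
    unfolding num_def by (rule order_trans[OF norm_triangle_ineq add_mono[OF norm_triangle_ineq order_refl]])
  also have "\<dots> = 2 * p * \<bar>amp x\<bar> + p * norm (osc_remainder 1 x) + p * norm (osc_remainder (-1) x)"
    unfolding norm_of_real norm_mult norm_G1 norm_G2 p_def by (simp add: abs_mult)
  also have "\<dots> \<le> 2 * p * amp_majorant x + p * amp_majorant x + p * amp_majorant x"
    using abs_amp_le oscillatory_tail(2)[OF assms] by (intro add_mono mult_left_mono) (auto simp: p_def)
  finally have "norm num / aconst \<le> 4 * p * amp_majorant x / aconst"
    using aconst_pos by (intro divide_right_mono) auto
  moreover have "norm (w0 x) = norm num / aconst"
    using aconst_pos by (simp add: w0_closed_form[OF assms] num_def p_def norm_divide)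
  ultimately show ?thesis
    by (simp add: p_def)
qed

lemma G_osc_tails_add:
  assumes "x > 0"
  shows "G1 x * osc_tail 1 x + G2 x * osc_tail (-1) x
           = (G2 x * osc_remainder (-1) x - G1 x * osc_remainder 1 x) / \<i>"
  unfolding osc_tails_eq[OF assms] G1_eq G2_eq cis_inverse[symmetric]
  by (simp add: field_simps del: cis_inverse)

lemma w0_has_vector_derivative:
  assumes "x > 0"
  shows "(w0 has_vector_derivative
           - of_real (5 / (8 * x)) * w0 x
           + of_real (dphase x) * (G1 x * osc_remainder 1 x - G2 x * osc_remainder (-1) x) / (\<i> * of_real aconst))
         (at x)"
proof -
  define W where "W u = (G1 u * osc_tail 1 u - G2 u * osc_tail (-1) u) / (\<i> * of_real aconst)" for u
  define c where "c = - 5 / (8 * x)"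
  define h where "h = amp x * dphase x"
  define D where "D = (G1 x * - (of_real h * cis (1 * phase x))
       + (of_real c - \<i> * of_real (dphase x)) * G1 x * osc_tail 1 x
       - (G2 x * - (of_real h * cis (-1 * phase x))
       + (of_real c + \<i> * of_real (dphase x)) * G2 x * osc_tail (-1) x)) / (\<i> * of_real aconst)"
  have "(G1 has_vector_derivative (of_real c - \<i> * of_real (dphase x)) * G1 x) (at x)"
    using weighted_cis_has_vector_derivative[OF assms, of "-1"] by (simp add: G1_eq[abs_def] c_def)
  moreover have "(G2 has_vector_derivative (of_real c + \<i> * of_real (dphase x)) * G2 x) (at x)"
    using weighted_cis_has_vector_derivative[OF assms, of 1] by (simp add: G2_eq[abs_def] c_def)
  ultimately have "(W has_vector_derivative D) (at x)"
    unfolding W_def[abs_def] D_def h_def using assms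
    by (intro has_vector_derivative_divide has_vector_derivative_diff has_vector_derivative_mult
        osc_tail_has_vector_derivative) auto
  then have "(w0 has_vector_derivative D) (at x)"
    by (rule has_vector_derivative_transform_within_open[where S = "{0<..}"])
       (use assms in \<open>auto simp: W_def w0_eq_osc_tails\<close>)
  moreover have "D = of_real c * ((G1 x * osc_tail 1 x - G2 x * osc_tail (-1) x) / (\<i> * of_real aconst))
      - \<i> * of_real (dphase x) * (G1 x * osc_tail 1 x + G2 x * osc_tail (-1) x) / (\<i> * of_real aconst)
      + of_real h * (G2 x * cis (- phase x) - G1 x * cis (phase x)) / (\<i> * of_real aconst)"
    unfolding D_def using aconst_pos by (simp add: field_simps)
  ultimately show ?thesis
    unfolding G1_cis_phase_eq_G2_cis_phase G_osc_tails_add[OF assms] w0_eq_osc_tails[OF assms, symmetric]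
    using aconst_pos by (simp add: c_def field_simps)
qed

lemma norm_vector_derivative_w0_le:
  assumes "x > 0"
  defines "p \<equiv> x powr (-5/8)"
  shows "norm (vector_derivative w0 (at x))
    \<le> 5 / (8 * x) * (4 * p * amp_majorant x / aconst) + dphase x * (2 * p * amp_majorant x) / aconst"
proof -
  have q: "dphase x \<ge> 0"
    using aconst_pos by (simp add: dphase_def)
  have "norm (G1 x * osc_remainder 1 x - G2 x * osc_remainder (-1) x)
      \<le> p * norm (osc_remainder 1 x) + p * norm (osc_remainder (-1) x)"
    by (rule order_trans[OF norm_triangle_ineq4]) (simp add: norm_mult norm_G1 norm_G2 p_def)
  also have "\<dots> \<le> p * amp_majorant x + p * amp_majorant x"
    using oscillatory_tail(2)[OF assms(1), of 1] oscillatory_tail(2)[OF assms(1), of "-1"]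
    by (intro add_mono mult_left_mono) (auto simp: p_def)
  also have "\<dots> = 2 * p * amp_majorant x"
    by simp
  finally have remainders: "norm (G1 x * osc_remainder 1 x - G2 x * osc_remainder (-1) x) \<le> 2 * p * amp_majorant x" .
  have "norm (vector_derivative w0 (at x))
      \<le> norm (- of_real (5 / (8 * x)) * w0 x)
         + norm (of_real (dphase x) * (G1 x * osc_remainder 1 x - G2 x * osc_remainder (-1) x)
                 / (\<i> * of_real aconst))"
    unfolding vector_derivative_at[OF w0_has_vector_derivative[OF assms(1)]] by (rule norm_triangle_ineq)
  also have "\<dots> = 5 / (8 * x) * norm (w0 x)
         + dphase x * norm (G1 x * osc_remainder 1 x - G2 x * osc_remainder (-1) x) / aconst"
    using assms(1) aconst_pos q by (simp add: norm_mult norm_divide)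
  also have "\<dots> \<le> 5 / (8 * x) * (4 * p * amp_majorant x / aconst) + dphase x * (2 * p * amp_majorant x) / aconst"
    using norm_w0_le[OF assms(1)] remainders assms(1) aconst_pos q
    by (intro add_mono mult_left_mono divide_right_mono) (auto simp: p_def)
  finally show ?thesis .
qed

section \<open>Numerical estimates\<close>

lemma sqrt6_ge: "sqrt 6 \<ge> 2.4494"
  by (rule real_le_rsqrt) (simp add: power2_eq_square)

lemma aconst_squared: "aconst\<^sup>2 = 8 * sqrt 6"
proof -
  have "aconst\<^sup>2 = 4 * (24 powr (1/4))\<^sup>2"
    by (simp add: aconst_def bconst_def power_mult_distrib)
  also have "(24 powr (1/4) :: real)\<^sup>2 = sqrt 24"
    by (simp add: powr_powr flip: powr_realpow powr_half_sqrt)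
  also have "sqrt 24 = sqrt (2\<^sup>2 * 6)"
    by simp
  also have "\<dots> = 2 * sqrt 6"
    by (simp only: real_sqrt_mult) simp
  finally show ?thesis
    by simp
qed

lemma sqrt6_mult_aconst_ge: "sqrt 6 * aconst \<ge> 10.8425"
proof (rule power2_le_imp_le)
  have "(10.8425 :: real)\<^sup>2 \<le> 48 * 2.4494"
    by (simp add: power2_eq_square)
  also have "\<dots> \<le> 48 * sqrt 6"
    using sqrt6_ge by simp
  also have "\<dots> = (sqrt 6 * aconst)\<^sup>2"
    by (simp add: power_mult_distrib aconst_squared)
  finally show "10.8425\<^sup>2 \<le> (sqrt 6 * aconst)\<^sup>2" .
qed (use aconst_pos in simp)

lemma powr_minus_five_quarters_le:
  fixes x :: real
  assumes "x \<ge> 11/2"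
  shows "x powr (-5/4) \<le> 1/8.42"
proof -
  define z where "z = (11/2 :: real) powr (5/4)"
  have "z ^ 4 = z powr (real 4)"
    by (simp only: powr_realpow z_def powr_gt_zero)
  also have "\<dots> = (11/2) powr (real 5)"
    unfolding z_def by (simp add: powr_powr)
  also have "\<dots> = (11/2) ^ 5"
    by (simp only: powr_realpow)
  finally have "8.42 ^ 4 \<le> z ^ 4"
    by (simp add: power_divide)
  moreover have "z \<ge> 0"
    by (simp add: z_def)
  ultimately have "8.42 \<le> z"
    using power_strict_mono[of z "8.42" 4] by linarith
  also have "z \<le> x powr (5/4)"
    unfolding z_def using assms by (intro powr_mono2) auto
  finally have "8.42 \<le> x powr (5/4)" .
  then show ?thesis
    by (simp add: powr_minus divide_simps)
qed

lemma powr_minus_five_halves_le: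
  fixes x :: real
  assumes "x \<ge> 11/2"
  shows "x powr (-5/2) \<le> 1/30"
proof -
  have "x powr (-5/2) \<le> x powr (-2)"
    using assms by (intro powr_mono) auto
  also have "\<dots> = inverse (x\<^sup>2)"
    using assms by (simp add: powr_minus)
  also have "\<dots> \<le> inverse ((11/2)\<^sup>2)"
    using assms by (intro le_imp_inverse_le power_mono) auto
  finally show ?thesis
    by (simp add: power2_eq_square)
qed

definition majorant_factor :: "real \<Rightarrow> real" where
  "majorant_factor x = 1 + eps1 * x powr (-5/2) + eps2 * x powr (-5)"

lemma weighted_amp_majorant_eq:
  "x powr (-5/8) * amp_majorant x = 2 * cN / aconst * x powr (-10) * majorant_factor x"
  unfolding amp_majorant_def majorant_factor_def by (simp add: algebra_simps flip: powr_add)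

lemma majorant_factor_bounds:
  fixes x :: real
  assumes x: "x \<ge> 11/2"
  shows "0 \<le> majorant_factor x" "majorant_factor x \<le> 1.00068"
proof -
  have "eps1 \<le> 1225 / (90049 * 2.4494)"
    unfolding eps1_def using sqrt6_ge by (intro divide_left_mono) auto
  then have eps1: "eps1 \<le> 0.006"
    by simp
  have u: "x powr (-5/2) \<le> 1/30"
    using powr_minus_five_halves_le[OF x] .
  have "x powr (-5) \<le> x powr (-5/2)"
    using x by (intro powr_mono) auto
  with u have v: "x powr (-5) \<le> 1/30"
    by linarith
  have "eps1 * x powr (-5/2) \<le> 0.006 * (1/30)"
    using eps1 u N0_constants_pos by (intro mult_mono) auto
  moreover have "eps2 * x powr (-5) \<le> 0.0142 * (1/30)"
    using v by (intro mult_mono) (auto simp: eps2_def)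
  ultimately show "0 \<le> majorant_factor x" "majorant_factor x \<le> 1.00068"
    unfolding majorant_factor_def using N0_constants_pos by auto
qed

lemma w0_majorant_eq:
  "4 * x powr (-5/8) * amp_majorant x / aconst = 4412401 / 589824 * x powr (-10) * majorant_factor x"
proof -
  have coeff: "8 * cN / aconst\<^sup>2 = 4412401 / 589824"
    unfolding aconst_squared cN_def by (simp add: field_simps)
  show ?thesis
    unfolding mult.assoc weighted_amp_majorant_eq coeff[symmetric] by (simp add: power2_eq_square)
qed

lemma two_cN_div_aconst_le: "2 * cN / aconst \<le> 8.2815"
proof -
  have "2 * cN / aconst = 8824802 / (98304 * (sqrt 6 * aconst))"
    unfolding cN_def by (simp add: field_simps)
  also have "\<dots> \<le> 8824802 / (98304 * 10.8425)"
    using sqrt6_mult_aconst_ge by (intro divide_left_mono) (auto simp: mult_ac)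
  finally show ?thesis
    by simp
qed

lemma w0_majorant_le:
  fixes x :: real
  assumes "x \<ge> 11/2"
  shows "4 * x powr (-5/8) * amp_majorant x / aconst \<le> 15/2 * x powr (-10)"
proof -
  have "4412401 / 589824 * x powr (-10) * majorant_factor x \<le> 4412401 / 589824 * x powr (-10) * 1.00068"
    using majorant_factor_bounds[OF assms] by (intro mult_left_mono) auto
  also have "\<dots> \<le> 15/2 * x powr (-10)"
    by simp
  finally show ?thesis
    unfolding w0_majorant_eq .
qed

lemma w0_derivative_majorant_le:
  fixes x :: real
  assumes x: "x \<ge> 11/2"
  defines "p \<equiv> x powr (-5/8)"
  shows "5 / (8 * x) * (4 * p * amp_majorant x / aconst) + dphase x * (2 * p * amp_majorant x) / aconst
           \<le> 8.85 * x powr (-39/4)"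
proof -
  define Q where "Q = majorant_factor x"
  define w where "w = x powr (-5/4)"
  define T where "T = x powr (-39/4)"
  have x0: "x > 0" and T: "0 \<le> T"
    using x by (simp_all add: T_def)
  have decay_term: "5 / (8 * x) * (4 * p * amp_majorant x / aconst) = 5/8 * (4412401 / 589824) * T * w * Q"
    unfolding p_def w0_majorant_eq T_def w_def Q_def using x0
    by (simp add: field_simps powr_mult_base flip: powr_add)
  have phase_term: "dphase x * (2 * p * amp_majorant x) / aconst = 2 * cN / aconst * T * Q"
    unfolding dphase_def mult.assoc p_def weighted_amp_majorant_eq T_def Q_def using aconst_pos x0
    by (simp add: field_simps powr_mult_base flip: powr_add)
  have "5 / (8 * x) * (4 * p * amp_majorant x / aconst) + dphase x * (2 * p * amp_majorant x) / aconst
      = 5/8 * (4412401 / 589824) * T * w * Q + 2 * cN / aconst * T * Q"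
    by (simp only: decay_term phase_term)
  also have "\<dots> = Q * (5/8 * (4412401 / 589824) * w + 2 * cN / aconst) * T"
    by (simp add: algebra_simps)
  also have "\<dots> \<le> 1.00068 * (5/8 * (4412401 / 589824) * (1/8.42) + 8.2815) * T"
  proof (rule mult_right_mono[OF _ T])
    have "0 \<le> w" "w \<le> 1/8.42"
      using powr_minus_five_quarters_le[OF x] by (auto simp: w_def)
    then show "Q * (5/8 * (4412401 / 589824) * w + 2 * cN / aconst)
        \<le> 1.00068 * (5/8 * (4412401 / 589824) * (1/8.42) + 8.2815)"
      using majorant_factor_bounds[OF x] two_cN_div_aconst_le N0_constants_pos aconst_pos
      by (intro mult_mono add_mono) (auto simp: Q_def)
  qed
  also have "\<dots> \<le> 8.85 * T"
    using T by (intro mult_right_mono) simp_all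
  finally show ?thesis
    unfolding T_def .
qed

theorem lemma3p1:
  fixes x :: real
  assumes "x \<ge> 11/2"
  shows "cmod (w0 x) \<le> 15/2 * x powr (-10)
    \<and> w0 differentiable (at x)
    \<and> cmod (vector_derivative w0 (at x)) \<le> 8.85 * x powr (-39/4)"
proof -
  have x: "x > 0"
    using assms by simp
  show ?thesis
  proof (intro conjI)
    show "cmod (w0 x) \<le> 15/2 * x powr (-10)"
      using norm_w0_le[OF x] w0_majorant_le[OF assms] by linarith
    show "w0 differentiable (at x)"
      using w0_has_vector_derivative[OF x] by (rule differentiableI_vector)
    show "cmod (vector_derivative w0 (at x)) \<le> 8.85 * x powr (-39/4)"
      using norm_vector_derivative_w0_le[OF x] w0_derivative_majorant_le[OF assms] by linarith
  qed
qed

end
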